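(* Let $V$ be a finite-dimensional real vector space, $\phi\in\mathrm{End}(V)\setminus\{0\}$, $W=\mathrm{im}(\phi)$, and $\mathfrak{g}=\mathfrak{g}_\phi$. A function $\zeta:\mathfrak{g}\to\mathbb{R}$ is a Lie quasi-state with canonical character $\alpha\in V^*$ if and only if there is a function $c:W\to\mathbb{R}$ such that \[\zeta(v,t)=\begin{cases} c(\phi(v)/t)\cdot t+\alpha(v), & t\neq 0,\\ \alpha(v), & t=0.\end{cases}\] The Lie quasi-state so defined is continuous if and only if $c$ is continuous and sublinear (i.e. $c(w)/\|w\|\to 0$ as $w\to\infty$).
   Context: $\mathfrak{g}_\phi$ is the Lie algebra $V\times\mathbb{R}$ with bracket $[(v,s),(w,t)]=(s\phi(w)-t\phi(v),0)$, i.e. $V\rtimes\mathbb{R}$ where the generator $1\in\mathbb{R}$ acts on the abelian ideal $V$ by $\phi$. A Lie quasi-state is $\zeta:\mathfrak{g}\to\mathbb{R}$ with $\zeta(aX+bY)=a\zeta(X)+b\zeta(Y)$ for all $a,b\in\mathbb{R}$ and commuting $X,Y$. The canonical character of $\zeta$ is the linear functional $\zeta_V\in V^*$, $\zeta_V(v)=\zeta(v,0)$. *)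

theory Defs
  imports "HOL-Analysis.Analysis"
begin

text \<open>The Lie algebra g_phi = V x R, with V modelled by a finite-dimensional real
normed space (euclidean_space, carrying its unique vector topology).\<close>

definition gphi_bracket :: "('v::euclidean_space \<Rightarrow> 'v) \<Rightarrow> 'v \<times> real \<Rightarrow> 'v \<times> real \<Rightarrow> 'v \<times> real" where
  "gphi_bracket \<phi> X Y = (snd X *\<^sub>R \<phi> (fst Y) - snd Y *\<^sub>R \<phi> (fst X), 0)"

definition gphi_commute :: "('v::euclidean_space \<Rightarrow> 'v) \<Rightarrow> 'v \<times> real \<Rightarrow> 'v \<times> real \<Rightarrow> bool" where
  "gphi_commute \<phi> X Y \<longleftrightarrow> gphi_bracket \<phi> X Y = 0"

definition lie_quasi_state :: "('v::euclidean_space \<Rightarrow> 'v) \<Rightarrow> ('v \<times> real \<Rightarrow> real) \<Rightarrow> bool" where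
  "lie_quasi_state \<phi> \<zeta> \<longleftrightarrow>
     (\<forall>X Y a b. gphi_commute \<phi> X Y \<longrightarrow> \<zeta> (a *\<^sub>R X + b *\<^sub>R Y) = a * \<zeta> X + b * \<zeta> Y)"

definition canonical_character :: "('v::euclidean_space \<times> real \<Rightarrow> real) \<Rightarrow> 'v \<Rightarrow> real" where
  "canonical_character \<zeta> = (\<lambda>v. \<zeta> (v, 0))"

definition zeta_of :: "('v::euclidean_space \<Rightarrow> 'v) \<Rightarrow> ('v \<Rightarrow> real) \<Rightarrow> ('v \<Rightarrow> real) \<Rightarrow> 'v \<times> real \<Rightarrow> real" where
  "zeta_of \<phi> c \<alpha> = (\<lambda>(v, t). if t \<noteq> 0 then c (\<phi> v /\<^sub>R t) * t + \<alpha> v else \<alpha> v)"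

end

theory Submission
  imports Defs
begin

text \<open>Two elements (v, s), (w, t) of the Lie algebra commute exactly when (\<phi> v, s) and (\<phi> w, t) lie
on a common line through the origin of W \<times> \<real>. A quasi-state is linear on commuting pairs, so it is
homogeneous, and adding k \<in> ker \<phi> to v changes \<zeta>(v, 1) by \<alpha>(k); hence \<zeta>(v, t) = t \<zeta>(v/t, 1)
is determined by \<alpha> and by c(w) = \<zeta>(u, 1) - \<alpha>(u) for any u with \<phi> u = w. Conversely, on each such
line the formula is linear since it equals t c(p) + \<alpha>(v) whenever \<phi> v = t p.

Near t = 0 the
term t c(\<phi> v/t) is bounded by \<epsilon> |\<phi> v| + M |t| for every \<epsilon> > 0 since c is continuous and sublinear.
Conversely, c(w)/|w| is the difference of the values of \<zeta> at two points of a fixed compact set at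
distance 1/|w|, so uniform continuity forces it to 0.\<close>

lemma lie_quasi_state_scaleR:
  assumes "lie_quasi_state \<phi> \<zeta>"
  shows "\<zeta> (a *\<^sub>R X) = a * \<zeta> X"
proof -
  have "gphi_commute \<phi> X X"
    by (simp add: gphi_commute_def gphi_bracket_def zero_prod_def)
  with assms have "\<zeta> (a *\<^sub>R X + 0 *\<^sub>R X) = a * \<zeta> X + 0 * \<zeta> X"
    unfolding lie_quasi_state_def by blast
  then show ?thesis by simp
qed

lemma lie_quasi_state_add_kernel:
  assumes "lie_quasi_state \<phi> \<zeta>" and "\<phi> k = 0"
  shows "\<zeta> (u + k, t) = \<zeta> (u, t) + \<zeta> (k, 0)"
proof -
  have "gphi_commute \<phi> (u, t) (k, 0)"
    using assms(2) by (simp add: gphi_commute_def gphi_bracket_def zero_prod_def)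
  with assms(1) have "\<zeta> (1 *\<^sub>R (u, t) + 1 *\<^sub>R (k, 0)) = 1 * \<zeta> (u, t) + 1 * \<zeta> (k, 0)"
    unfolding lie_quasi_state_def by blast
  then show ?thesis by simp
qed

lemma linear_right_inverse_on_range:
  fixes \<phi> :: "'v::euclidean_space \<Rightarrow> 'w::euclidean_space"
  assumes "linear \<phi>"
  obtains g where "linear g" and "\<And>v. \<phi> (g (\<phi> v)) = \<phi> v"
  using real_vector.linear_exists_right_inverse_on[OF assms real_vector.subspace_UNIV] by auto

lemma lie_quasi_state_eq_zeta_of:
  fixes \<phi> :: "'v::euclidean_space \<Rightarrow> 'v"
  assumes lin: "linear \<phi>" and la: "linear \<alpha>"
    and q: "lie_quasi_state \<phi> \<zeta>" and cc: "canonical_character \<zeta> = \<alpha>"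
    and g: "\<And>v. \<phi> (g (\<phi> v)) = \<phi> v"
  shows "\<zeta> = zeta_of \<phi> (\<lambda>w. \<zeta> (g w, 1) - \<alpha> (g w)) \<alpha>"
proof
  fix p :: "'v \<times> real"
  obtain v t where p: "p = (v, t)" by (cases p)
  define c where "c = (\<lambda>w. \<zeta> (g w, 1) - \<alpha> (g w))"
  have slice0: "\<zeta> (x, 0) = \<alpha> x" for x
    using cc unfolding canonical_character_def by meson
  have slice1: "\<zeta> (u, 1) = c (\<phi> u) + \<alpha> u" for u
  proof -
    have "\<phi> (u - g (\<phi> u)) = 0" using g lin by (simp add: linear_diff)
    then have "\<zeta> (g (\<phi> u) + (u - g (\<phi> u)), 1) = \<zeta> (g (\<phi> u), 1) + \<alpha> (u - g (\<phi> u))"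
      by (simp only: lie_quasi_state_add_kernel[OF q] slice0)
    then show ?thesis using la by (simp add: c_def linear_diff)
  qed
  show "\<zeta> p = zeta_of \<phi> c \<alpha> p"
  proof (cases "t = 0")
    case True
    then show ?thesis by (simp add: p zeta_of_def slice0)
  next
    case False
    have "\<zeta> (v, t) = \<zeta> (t *\<^sub>R (v /\<^sub>R t, 1))" using False by simp
    also have "\<dots> = t * \<zeta> (v /\<^sub>R t, 1)" by (rule lie_quasi_state_scaleR[OF q])
    also have "\<dots> = t * (c (\<phi> v /\<^sub>R t) + \<alpha> v / t)"
      using lin la by (simp add: slice1 linear_scale divide_inverse_commute)
    finally show ?thesis using False by (simp add: p zeta_of_def algebra_simps)
  qed
qed

lemma gphi_commute_common_ray:
  assumes "gphi_commute \<phi> (v, s) (w, t)" and "s \<noteq> 0 \<or> t \<noteq> 0"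
  obtains p where "\<phi> v = s *\<^sub>R p" and "\<phi> w = t *\<^sub>R p"
proof -
  have com: "s *\<^sub>R \<phi> w = t *\<^sub>R \<phi> v"
    using assms(1) by (simp add: gphi_commute_def gphi_bracket_def zero_prod_def)
  show ?thesis
  proof (cases "s = 0")
    case False
    with com have "\<phi> w = t *\<^sub>R (\<phi> v /\<^sub>R s)"
      by (metis divideR_right scaleR_scaleR mult.commute)
    moreover have "\<phi> v = s *\<^sub>R (\<phi> v /\<^sub>R s)" using False by simp
    ultimately show ?thesis by (rule that[rotated])
  next
    case True
    with assms(2) com have "\<phi> v = s *\<^sub>R (\<phi> w /\<^sub>R t)" by auto
    moreover have "\<phi> w = t *\<^sub>R (\<phi> w /\<^sub>R t)" using True assms(2) by simp
    ultimately show ?thesis by (rule that)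
  qed
qed

lemma zeta_of_on_ray:
  assumes "\<phi> v = t *\<^sub>R p"
  shows "zeta_of \<phi> c \<alpha> (v, t) = t * c p + \<alpha> v"
  using assms by (simp add: zeta_of_def)

lemma lie_quasi_state_zeta_of:
  fixes \<phi> :: "'v::euclidean_space \<Rightarrow> 'v"
  assumes lin: "linear \<phi>" and la: "linear \<alpha>"
  shows "lie_quasi_state \<phi> (zeta_of \<phi> c \<alpha>)"
  unfolding lie_quasi_state_def
proof (intro allI impI)
  fix X Y :: "'v \<times> real" and a b :: real
  assume XY: "gphi_commute \<phi> X Y"
  obtain v s w t where X: "X = (v, s)" and Y: "Y = (w, t)" by (cases X, cases Y)
  have \<alpha>_comb: "\<alpha> (a *\<^sub>R v + b *\<^sub>R w) = a * \<alpha> v + b * \<alpha> w"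
    using la by (simp add: linear_add linear_scale)
  show "zeta_of \<phi> c \<alpha> (a *\<^sub>R X + b *\<^sub>R Y) = a * zeta_of \<phi> c \<alpha> X + b * zeta_of \<phi> c \<alpha> Y"
  proof (cases "s = 0 \<and> t = 0")
    case True
    then show ?thesis by (simp add: X Y zeta_of_def \<alpha>_comb)
  next
    case False
    then obtain p where pv: "\<phi> v = s *\<^sub>R p" and pw: "\<phi> w = t *\<^sub>R p"
      using gphi_commute_common_ray XY X Y by blast
    have "\<phi> (a *\<^sub>R v + b *\<^sub>R w) = (a * s + b * t) *\<^sub>R p"
      using lin by (simp add: linear_add linear_scale pv pw algebra_simps)
    then show ?thesis
      by (simp add: X Y zeta_of_on_ray[where \<phi>=\<phi>, OF pv] zeta_of_on_ray[where \<phi>=\<phi>, OF pw]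
          zeta_of_on_ray \<alpha>_comb algebra_simps)
  qed
qed

lemma canonical_character_zeta_of: "canonical_character (zeta_of \<phi> c \<alpha>) = \<alpha>"
  by (simp add: canonical_character_def zeta_of_def)

lemma sublinear_bound:
  fixes c :: "'a::euclidean_space \<Rightarrow> real"
  assumes "closed S" and "continuous_on S c"
    and "((\<lambda>w. c w / norm w) \<longlongrightarrow> 0) (inf at_infinity (principal S))" and "\<epsilon> > 0"
  obtains M where "\<And>w. w \<in> S \<Longrightarrow> \<bar>c w\<bar> \<le> \<epsilon> * norm w + M"
proof -
  have "\<forall>\<^sub>F w in inf at_infinity (principal S). dist (c w / norm w) 0 < \<epsilon>"
    using assms(3,4) by (rule tendstoD)
  then obtain b where far: "\<And>w. b \<le> norm w \<Longrightarrow> w \<in> S \<Longrightarrow> \<bar>c w / norm w\<bar> < \<epsilon>"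
    unfolding eventually_inf_principal eventually_at_infinity dist_real_def by auto
  define R where "R = max b 1"
  have "compact (S \<inter> cball 0 R)" using assms(1) by (intro closed_Int_compact compact_cball)
  moreover have "continuous_on (S \<inter> cball 0 R) c" using assms(2) by (rule continuous_on_subset) auto
  ultimately have "bounded (c ` (S \<inter> cball 0 R))"
    by (intro compact_imp_bounded compact_continuous_image)
  then obtain M where "M > 0" and near: "\<And>w. w \<in> S \<Longrightarrow> norm w \<le> R \<Longrightarrow> \<bar>c w\<bar> \<le> M"
    unfolding bounded_pos by fastforce
  show ?thesis
  proof (rule that)
    fix w assume w: "w \<in> S"
    show "\<bar>c w\<bar> \<le> \<epsilon> * norm w + M"
    proof (cases "norm w \<le> R")
      case True
      then show ?thesis using near[OF w] \<open>\<epsilon> > 0\<close> by (simp add: add_increasing)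
    next
      case False
      then have "norm w > 0" "b \<le> norm w" by (auto simp: R_def)
      with far[OF _ w] have "\<bar>c w\<bar> < \<epsilon> * norm w" by (simp add: field_simps)
      then show ?thesis using \<open>M > 0\<close> by simp
    qed
  qed
qed

lemma isCont_zeta_of_slice_zero:
  fixes \<phi> :: "'v::euclidean_space \<Rightarrow> 'v"
  assumes lin: "linear \<phi>" and la: "linear \<alpha>" and cc: "continuous_on (range \<phi>) c"
    and sub: "((\<lambda>w. c w / norm w) \<longlongrightarrow> 0) (inf at_infinity (principal (range \<phi>)))"
  shows "isCont (zeta_of \<phi> c \<alpha>) (v0, 0)"
proof -
  define r where "r q = (if snd q \<noteq> 0 then c (\<phi> (fst q) /\<^sub>R snd q) * snd q else 0)" for q
  have bl: "bounded_linear \<phi>" "bounded_linear \<alpha>" using lin la by (simp_all add: linear_linear)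
  have fst0: "(fst \<longlongrightarrow> v0) (at (v0, 0))"
    using tendsto_fst[OF tendsto_ident_at[of "(v0, 0)" UNIV]] by simp
  have snd0: "(snd \<longlongrightarrow> 0) (at (v0, 0))"
    using tendsto_snd[OF tendsto_ident_at[of "(v0, 0)" UNIV]] by simp
  have "(r \<longlongrightarrow> 0) (at (v0, 0))"
  proof (rule tendstoI)
    fix e :: real assume "e > 0"
    define \<epsilon> where "\<epsilon> = e / (2 * (norm (\<phi> v0) + 1))"
    have "\<epsilon> > 0" "\<epsilon> * norm (\<phi> v0) < e"
      using \<open>e > 0\<close> by (auto simp: \<epsilon>_def field_simps add_pos_nonneg)
    have "closed (range \<phi>)"
      by (rule closed_subspace[OF real_vector.linear_subspace_image[OF lin real_vector.subspace_UNIV]])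
    then obtain M where M: "\<And>w. w \<in> range \<phi> \<Longrightarrow> \<bar>c w\<bar> \<le> \<epsilon> * norm w + M"
      using sublinear_bound[OF _ cc sub \<open>\<epsilon> > 0\<close>] by blast
    have bound: "\<bar>r q\<bar> \<le> \<epsilon> * norm (\<phi> (fst q)) + M * \<bar>snd q\<bar>" for q
    proof (cases "snd q = 0")
      case False
      define w where "w = \<phi> (fst q) /\<^sub>R snd q"
      have "w \<in> range \<phi>" using lin by (metis w_def linear_scale rangeI)
      have nw: "norm w * \<bar>snd q\<bar> = norm (\<phi> (fst q))" using False by (simp add: w_def)
      have "\<bar>r q\<bar> = \<bar>c w\<bar> * \<bar>snd q\<bar>" using False by (simp add: r_def w_def abs_mult)
      also have "\<dots> \<le> (\<epsilon> * norm w + M) * \<bar>snd q\<bar>"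
        by (intro mult_right_mono M \<open>w \<in> range \<phi>\<close>) simp
      also have "\<dots> = \<epsilon> * norm (\<phi> (fst q)) + M * \<bar>snd q\<bar>"
        by (simp only: distrib_right mult.assoc nw)
      finally show ?thesis .
    qed (use \<open>\<epsilon> > 0\<close> in \<open>simp add: r_def\<close>)
    have "((\<lambda>q. \<epsilon> * norm (\<phi> (fst q)) + M * \<bar>snd q\<bar>)
        \<longlongrightarrow> \<epsilon> * norm (\<phi> v0) + M * \<bar>0\<bar>) (at (v0, 0))"
      by (intro tendsto_intros bounded_linear.tendsto[OF bl(1)] fst0 snd0)
    then have "\<forall>\<^sub>F q in at (v0, 0). \<epsilon> * norm (\<phi> (fst q)) + M * \<bar>snd q\<bar> < e"
      using \<open>\<epsilon> * norm (\<phi> v0) < e\<close> by (intro order_tendstoD(2)) auto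
    then show "\<forall>\<^sub>F q in at (v0, 0). dist (r q) 0 < e"
      by (rule eventually_mono) (simp add: dist_real_def le_less_trans[OF bound])
  qed
  moreover have "((\<lambda>q. \<alpha> (fst q)) \<longlongrightarrow> \<alpha> v0) (at (v0, 0))"
    by (rule bounded_linear.tendsto[OF bl(2) fst0])
  ultimately have "((\<lambda>q. \<alpha> (fst q) + r q) \<longlongrightarrow> \<alpha> v0 + 0) (at (v0, 0))"
    by (intro tendsto_add)
  moreover have "zeta_of \<phi> c \<alpha> = (\<lambda>q. \<alpha> (fst q) + r q)"
    by (auto simp: zeta_of_def r_def)
  ultimately show ?thesis by (simp add: isCont_def r_def)
qed

lemma continuous_on_zeta_of_off_slice_zero:
  fixes \<phi> :: "'v::euclidean_space \<Rightarrow> 'v"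
  assumes lin: "linear \<phi>" and la: "linear \<alpha>" and cc: "continuous_on (range \<phi>) c"
  shows "continuous_on {q. snd q \<noteq> 0} (zeta_of \<phi> c \<alpha>)"
proof -
  let ?S = "{q :: 'v \<times> real. snd q \<noteq> 0}"
  have bl: "bounded_linear \<phi>" "bounded_linear \<alpha>" using lin la by (simp_all add: linear_linear)
  have "continuous_on ?S (\<lambda>q. \<phi> (fst q) /\<^sub>R snd q)"
    by (auto intro!: continuous_intros bounded_linear.continuous_on[OF bl(1)])
  moreover have "(\<lambda>q. \<phi> (fst q) /\<^sub>R snd q) ` ?S \<subseteq> range \<phi>"
    using lin by (auto simp: linear_scale[OF lin, symmetric])
  ultimately have "continuous_on ?S (\<lambda>q. c (\<phi> (fst q) /\<^sub>R snd q))"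
    by (rule continuous_on_compose2[OF cc])
  then have "continuous_on ?S (\<lambda>q. c (\<phi> (fst q) /\<^sub>R snd q) * snd q + \<alpha> (fst q))"
    by (intro continuous_intros bounded_linear.continuous_on[OF bl(2)])
  then show ?thesis
    by (rule continuous_on_eq) (auto simp: zeta_of_def)
qed

lemma continuous_on_zeta_of:
  fixes \<phi> :: "'v::euclidean_space \<Rightarrow> 'v"
  assumes lin: "linear \<phi>" and la: "linear \<alpha>" and cc: "continuous_on (range \<phi>) c"
    and sub: "((\<lambda>w. c w / norm w) \<longlongrightarrow> 0) (inf at_infinity (principal (range \<phi>)))"
  shows "continuous_on UNIV (zeta_of \<phi> c \<alpha>)"
proof (rule continuous_at_imp_continuous_on, safe)
  fix v and t :: real
  show "isCont (zeta_of \<phi> c \<alpha>) (v, t)"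
  proof (cases "t = 0")
    case True
    with isCont_zeta_of_slice_zero[OF assms] show ?thesis by simp
  next
    case False
    have "open {q :: 'v \<times> real. snd q \<noteq> 0}" by (intro open_Collect_neq continuous_intros)
    with False continuous_on_zeta_of_off_slice_zero[OF lin la cc] show ?thesis
      by (simp add: continuous_on_eq_continuous_at)
  qed
qed

lemma uniformly_continuous_near_slice_zero:
  fixes f :: "'a::euclidean_space \<times> real \<Rightarrow> real"
  assumes "continuous_on UNIV f" and "e > 0"
  obtains d where "d > 0"
    and "\<And>x t. norm x \<le> B \<Longrightarrow> \<bar>t\<bar> < d \<Longrightarrow> dist (f (x, t)) (f (x, 0)) < e"
proof -
  define K where "K = cball (0::'a) B \<times> cball (0::real) 1"
  have "uniformly_continuous_on K f"
    using assms(1) by (intro compact_uniformly_continuous)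
      (auto simp: K_def intro: compact_Times continuous_on_subset)
  then obtain d where "d > 0"
    and d: "\<And>p q. p \<in> K \<Longrightarrow> q \<in> K \<Longrightarrow> dist q p < d \<Longrightarrow> dist (f q) (f p) < e"
    unfolding uniformly_continuous_on_def using assms(2) by metis
  show ?thesis
  proof (rule that[of "min d 1"])
    fix x :: 'a and t :: real assume "norm x \<le> B" "\<bar>t\<bar> < min d 1"
    then show "dist (f (x, t)) (f (x, 0)) < e"
      by (intro d) (auto simp: K_def dist_Pair_Pair)
  qed (use \<open>d > 0\<close> in simp)
qed

lemma continuous_zeta_of_imp_continuous_sublinear:
  fixes \<phi> :: "'v::euclidean_space \<Rightarrow> 'v"
  assumes lin: "linear \<phi>" and la: "linear \<alpha>" and cz: "continuous_on UNIV (zeta_of \<phi> c \<alpha>)"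
  shows "continuous_on (range \<phi>) c"
    and "((\<lambda>w. c w / norm w) \<longlongrightarrow> 0) (inf at_infinity (principal (range \<phi>)))"
proof -
  let ?z = "zeta_of \<phi> c \<alpha>"
  obtain g where lg: "linear g" and g: "\<And>v. \<phi> (g (\<phi> v)) = \<phi> v"
    using linear_right_inverse_on_range[OF lin] by blast
  have bl: "bounded_linear \<alpha>" "bounded_linear g" using la lg by (simp_all add: linear_linear)
  have c_eq: "c w = ?z (g w, 1) - \<alpha> (g w)" if "w \<in> range \<phi>" for w
    using that g by (auto simp: zeta_of_def)
  have "continuous_on (range \<phi>) (\<lambda>w. ?z (g w, 1) - \<alpha> (g w))"
    by (intro continuous_intros continuous_on_compose2[OF cz] bounded_linear.continuous_on[OF bl(1)]
        bounded_linear.continuous_on[OF bl(2)]) auto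
  then show "continuous_on (range \<phi>) c"
    by (rule continuous_on_eq) (simp add: c_eq)
  obtain B where B: "\<And>x. norm (g x) \<le> B * norm x"
    using linear_bounded_pos[OF lg] by metis
  show "((\<lambda>w. c w / norm w) \<longlongrightarrow> 0) (inf at_infinity (principal (range \<phi>)))"
  proof (rule tendstoI)
    fix e :: real assume "e > 0"
    then obtain d where "d > 0"
      and d: "\<And>x t. norm x \<le> B \<Longrightarrow> \<bar>t\<bar> < d \<Longrightarrow> dist (?z (x, t)) (?z (x, 0)) < e"
      using uniformly_continuous_near_slice_zero[OF cz] by metis
    have "dist (c w / norm w) 0 < e" if w: "w \<in> range \<phi>" "2 / d \<le> norm w" for w
    proof -
      define n where "n = norm w"
      have "2 \<le> d * n" using w(2) \<open>d > 0\<close> by (simp add: n_def field_simps)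
      then have "n > 0" by (cases "n = 0") (auto simp: n_def)
      then have "1 / n < d" using \<open>2 \<le> d * n\<close> by (simp add: field_simps)
      define x where "x = g w /\<^sub>R n"
      have "norm x \<le> B" using B[of w] \<open>n > 0\<close> by (simp add: x_def n_def field_simps)
      have "\<phi> x /\<^sub>R (1 / n) = w"
        using g w(1) \<open>n > 0\<close> lin by (auto simp: x_def linear_scale)
      then have "?z (x, 1 / n) - ?z (x, 0) = c w / n"
        using \<open>n > 0\<close> by (simp add: zeta_of_def)
      moreover have "dist (?z (x, 1 / n)) (?z (x, 0)) < e"
        using d \<open>norm x \<le> B\<close> \<open>1 / n < d\<close> \<open>n > 0\<close> by simp
      ultimately show ?thesis by (simp add: dist_real_def n_def)
    qed
    then show "\<forall>\<^sub>F w in inf at_infinity (principal (range \<phi>)). dist (c w / norm w) 0 < e"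
      unfolding eventually_inf_principal eventually_at_infinity by blast
  qed
qed

theorem mainTheorem9:
  fixes \<phi> :: "'v::euclidean_space \<Rightarrow> 'v" and \<alpha> :: "'v \<Rightarrow> real"
  assumes "linear \<phi>" and "\<phi> \<noteq> (\<lambda>v. 0)" and "linear \<alpha>"
  shows "(\<forall>\<zeta>. (lie_quasi_state \<phi> \<zeta> \<and> canonical_character \<zeta> = \<alpha>) \<longleftrightarrow>
            (\<exists>c. \<zeta> = zeta_of \<phi> c \<alpha>))
       \<and> (\<forall>c. continuous_on UNIV (zeta_of \<phi> c \<alpha>) \<longleftrightarrow>
            (continuous_on (range \<phi>) c \<and>
             ((\<lambda>w. c w / norm w) \<longlongrightarrow> 0) (inf at_infinity (principal (range \<phi>)))))"
proof (intro conjI allI)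
  fix \<zeta>
  obtain g where g: "\<And>v. \<phi> (g (\<phi> v)) = \<phi> v"
    using linear_right_inverse_on_range[OF assms(1)] by blast
  show "(lie_quasi_state \<phi> \<zeta> \<and> canonical_character \<zeta> = \<alpha>) \<longleftrightarrow> (\<exists>c. \<zeta> = zeta_of \<phi> c \<alpha>)"
    using lie_quasi_state_eq_zeta_of[OF assms(1,3) _ _ g] lie_quasi_state_zeta_of[OF assms(1,3)]
      canonical_character_zeta_of by blast
next
  fix c
  show "continuous_on UNIV (zeta_of \<phi> c \<alpha>) \<longleftrightarrow>
      (continuous_on (range \<phi>) c \<and>
       ((\<lambda>w. c w / norm w) \<longlongrightarrow> 0) (inf at_infinity (principal (range \<phi>))))"
    using continuous_zeta_of_imp_continuous_sublinear[OF assms(1,3)] continuous_on_zeta_of[OF assms(1,3)] by blast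
qed

end
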